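(* Assume $n_1,n_2\in(0,4)$ and (IE). Then there exists a bounded function $m:(0,\infty)\to\mathbb{R}$ such that for all $\varepsilon\in(0,1)$, $$\int_\Omega u_\varepsilon(\cdot,t)+\int_\Omega v_\varepsilon(\cdot,t)\le m(t)\qquad\text{for all }t\in(0,T_{max,\varepsilon}),$$ and such that $$\limsup_{t\to\infty}m(t)\le m_\infty:=\frac{|\Omega|}{2}\Big(\lambda_1+\frac{1}{2\sqrt3}+1+\max\{a_1^2,1\}\frac{a_2}{2\sqrt3}\Big)^2+\frac{|\Omega|}{2}\Big(\lambda_2+\frac{1}{2\sqrt3}+1\Big)^2\max\{a_1^2,1\}.$$
   Context: Let $\Omega\subset\mathbb{R}$ be a bounded open interval, $D_i,a_i,\lambda_i,\chi_i>0$ ($i=1,2$), and fix $\alpha\in(0,\frac12]$. Assumption (IE): $u_0,v_0\in W^{1,2}(\Omega)$ with $u_0>0,v_0>0$ in $\overline\Omega$; for each $\varepsilon\in(0,1)$, $u_{0\varepsilon},v_{0\varepsilon}\in C^5(\overline\Omega)$ with $u_{0\varepsilon x}=u_{0\varepsilon xxx}=v_{0\varepsilon x}=v_{0\varepsilon xxx}=0$ on $\partial\Omega$; $\frac12\inf_\Omega u_0\le u_{0\varepsilon}\le u_0+1$, $\frac12\inf_\Omega v_0\le v_{0\varepsilon}\le v_0+1$ in $\Omega$; $\int_\Omega u_{0\varepsilon x}^2\le\int_\Omega u_{0x}^2+1$, $\int_\Omega v_{0\varepsilon x}^2\le\int_\Omega v_{0x}^2+1$; $u_{0\varepsilon}\to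 u_0$, $v_{0\varepsilon}\to v_0$ a.e. as $\varepsilon\searrow0$. Approximating problem: $u_t=-\varepsilon\big(\frac{u^4}{u^{4-n_1}+\varepsilon}u_{xxx}\big)_x+\varepsilon^{\alpha/2}(u^{-\alpha}u_x)_x+D_1u_{xx}-\chi_1\big(\frac{u^{5-n_1}}{u^{4-n_1}+\varepsilon}v_x\big)_x+\frac{3u^3}{3u^2+\varepsilon}(\lambda_1-u+a_1v)$, $v_t=-\varepsilon\big(\frac{v^4}{v^{4-n_2}+\varepsilon}v_{xxx}\big)_x+\varepsilon^{\alpha/2}(v^{-\alpha}v_x)_x+D_2v_{xx}+\chi_2\big(\frac{v^{5-n_2}}{v^{4-n_2}+\varepsilon}u_x\big)_x+\frac{3v^3}{3v^2+\varepsilon}(\lambda_2-v-a_2u)$ in $\Omega\times(0,\infty)$, $u_x=v_x=u_{xxx}=v_{xxx}=0$ on $\partial\Omega$, $u(\cdot,0)=u_{0\varepsilon}$, $v(\cdot,0)=v_{0\varepsilon}$. For $n_i\in(0,4)$ and each $\varepsilon$ it has a classical solution $(u_\varepsilon,v_\varepsilon)$, positive in $\overline\Omega\times[0,T_{max,\varepsilon})$, belonging to $\bigcap_{s\in(3/2,2)}C^0([0,T_{max,\varepsilon});W^{s,2}(\Omega))\cap C^{4,1}(\overline\Omega\times(0,T_{max,\varepsilon}))$, where $T_{max,\varepsilon}\in(0,\infty]$ is maximal: either $T_{max,\varepsilon}=\infty$ or $\limsup_{t\nearrow T_{max,\varepsilon}}\{\|u_\varepsilon(\cdot,t)\|_{W^{2,2}}+\|1/u_\varepsilon(\cdot,t)\|_{L^\infty}+\|v_\varepsilon(\cdot,t)\|_{W^{2,2}}+\|1/v_\varepsilon(\cdot,t)\|_{L^\infty}\}=\infty$.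 *)

theory Defs
  imports "HOL-Analysis.Analysis"
begin

text \<open>Omega is the open interval {xa<..<xb}, xa < xb.  Functions of (x,t) are
curried as f x t.  Derivative families: D k x t is the k-th x-derivative.\<close>

definition L2sq :: "real \<Rightarrow> real \<Rightarrow> (real \<Rightarrow> real) \<Rightarrow> ennreal" where
  "L2sq xa xb f = (\<integral>\<^sup>+ x. indicator {xa..xb} x * ennreal ((f x)\<^sup>2) \<partial>lborel)"

definition gag_sq :: "real \<Rightarrow> real \<Rightarrow> real \<Rightarrow> (real \<Rightarrow> real) \<Rightarrow> ennreal" where
  "gag_sq xa xb \<sigma> g = (\<integral>\<^sup>+ x. \<integral>\<^sup>+ y. indicator ({xa..xb} \<times> {xa..xb}) (x, y) *
      ennreal ((g x - g y)\<^sup>2 / \<bar>x - y\<bar> powr (1 + 2 * \<sigma>)) \<partial>lborel \<partial>lborel)"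

text \<open>Squared W^{s,2} norm, s in (1,2), of a function f with (classical/weak) derivative f'.\<close>
definition Ws_sq :: "real \<Rightarrow> real \<Rightarrow> real \<Rightarrow> (real \<Rightarrow> real) \<Rightarrow> (real \<Rightarrow> real) \<Rightarrow> ennreal" where
  "Ws_sq xa xb s f f' = L2sq xa xb f + L2sq xa xb f' + gag_sq xa xb (s - 1) f'"

text \<open>f is in W^{1,2}(xa,xb) with weak derivative g (absolutely continuous representative).\<close>
definition W12 :: "real \<Rightarrow> real \<Rightarrow> (real \<Rightarrow> real) \<Rightarrow> (real \<Rightarrow> real) \<Rightarrow> bool" where
  "W12 xa xb f g \<longleftrightarrow> set_integrable lborel {xa..xb} g \<and>
     set_integrable lborel {xa..xb} (\<lambda>x. (g x)\<^sup>2) \<and>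
     (\<forall>x\<in>{xa..xb}. f x = f xa + (LBINT y=xa..x. g y))"

definition Ck_fam :: "nat \<Rightarrow> real \<Rightarrow> real \<Rightarrow> (nat \<Rightarrow> real \<Rightarrow> real) \<Rightarrow> bool" where
  "Ck_fam k xa xb D \<longleftrightarrow>
     (\<forall>j<k. \<forall>x\<in>{xa..xb}. (D j has_real_derivative D (Suc j) x) (at x within {xa..xb})) \<and>
     (\<forall>j\<le>k. continuous_on {xa..xb} (D j))"

definition tcl :: "ereal \<Rightarrow> real set" where "tcl T = {t. 0 \<le> t \<and> ereal t < T}"
definition tpos :: "ereal \<Rightarrow> real set" where "tpos T = {t. 0 < t \<and> ereal t < T}"

text \<open>Approximate fluxes: u_t = (flux)_x + reaction.\<close>
definition flux_u :: "real \<Rightarrow> real \<Rightarrow> real \<Rightarrow> real \<Rightarrow> real \<Rightarrow> real \<Rightarrow> real \<Rightarrow> real \<Rightarrow> real \<Rightarrow> real" where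
  "flux_u \<epsilon> \<alpha> n D chi u ux uxxx vx =
     - \<epsilon> * (u ^ 4 / (u powr (4 - n) + \<epsilon>) * uxxx)
     + \<epsilon> powr (\<alpha> / 2) * (u powr (- \<alpha>) * ux) + D * ux
     - chi * (u powr (5 - n) / (u powr (4 - n) + \<epsilon>) * vx)"

definition flux_v :: "real \<Rightarrow> real \<Rightarrow> real \<Rightarrow> real \<Rightarrow> real \<Rightarrow> real \<Rightarrow> real \<Rightarrow> real \<Rightarrow> real \<Rightarrow> real" where
  "flux_v \<epsilon> \<alpha> n D chi v vx vxxx ux =
     - \<epsilon> * (v ^ 4 / (v powr (4 - n) + \<epsilon>) * vxxx)
     + \<epsilon> powr (\<alpha> / 2) * (v powr (- \<alpha>) * vx) + D * vx
     + chi * (v powr (5 - n) / (v powr (4 - n) + \<epsilon>) * ux)"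

text \<open>U k x t, V k x t are the k-th x-derivatives (k \<le> 4), Ut, Vt the time derivatives.\<close>
definition approx_sol ::
  "real \<Rightarrow> real \<Rightarrow> real \<Rightarrow> real \<Rightarrow> real \<Rightarrow> real \<Rightarrow> real \<Rightarrow> real \<Rightarrow> real \<Rightarrow> real \<Rightarrow> real \<Rightarrow> real \<Rightarrow> real \<Rightarrow>
   real \<Rightarrow> (real \<Rightarrow> real) \<Rightarrow> (real \<Rightarrow> real) \<Rightarrow> ereal \<Rightarrow>
   (nat \<Rightarrow> real \<Rightarrow> real \<Rightarrow> real) \<Rightarrow> (real \<Rightarrow> real \<Rightarrow> real) \<Rightarrow>
   (nat \<Rightarrow> real \<Rightarrow> real \<Rightarrow> real) \<Rightarrow> (real \<Rightarrow> real \<Rightarrow> real) \<Rightarrow> bool" where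
  "approx_sol xa xb D1 D2 a1 a2 lam1 lam2 chi1 chi2 \<alpha> n1 n2 \<epsilon> U0 V0 T U Ut V Vt \<longleftrightarrow>
    T > 0 \<and>
    \<comment> \<open>positivity on closure of Omega times [0,T)\<close>
    (\<forall>x\<in>{xa..xb}. \<forall>t\<in>tcl T. U 0 x t > 0 \<and> V 0 x t > 0) \<and>
    \<comment> \<open>initial data\<close>
    (\<forall>x\<in>{xa..xb}. U 0 x 0 = U0 x \<and> V 0 x 0 = V0 x) \<and>
    \<comment> \<open>first x-derivative exists on [0,T) (W^{s,2}, s>3/2, slices are C^1)\<close>
    (\<forall>t\<in>tcl T. \<forall>x\<in>{xa..xb}.
        ((\<lambda>y. U 0 y t) has_real_derivative U 1 x t) (at x within {xa..xb}) \<and>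
        ((\<lambda>y. V 0 y t) has_real_derivative V 1 x t) (at x within {xa..xb})) \<and>
    \<comment> \<open>C^{4,1}(closure Omega times (0,T))\<close>
    (\<forall>t\<in>tpos T. \<forall>x\<in>{xa..xb}. \<forall>j<4.
        ((\<lambda>y. U j y t) has_real_derivative U (Suc j) x t) (at x within {xa..xb}) \<and>
        ((\<lambda>y. V j y t) has_real_derivative V (Suc j) x t) (at x within {xa..xb})) \<and>
    (\<forall>t\<in>tpos T. \<forall>x\<in>{xa..xb}.
        ((\<lambda>s. U 0 x s) has_real_derivative Ut x t) (at t) \<and>
        ((\<lambda>s. V 0 x s) has_real_derivative Vt x t) (at t)) \<and>
    (\<forall>j\<le>4. continuous_on ({xa..xb} \<times> tpos T) (\<lambda>(x, t). U j x t) \<and>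
             continuous_on ({xa..xb} \<times> tpos T) (\<lambda>(x, t). V j x t)) \<and>
    continuous_on ({xa..xb} \<times> tpos T) (\<lambda>(x, t). Ut x t) \<and>
    continuous_on ({xa..xb} \<times> tpos T) (\<lambda>(x, t). Vt x t) \<and>
    \<comment> \<open>C^0([0,T); W^{s,2}) for every s in (3/2,2)\<close>
    (\<forall>s. 3/2 < s \<and> s < 2 \<longrightarrow>
       (\<forall>t\<in>tcl T. Ws_sq xa xb s (\<lambda>x. U 0 x t) (\<lambda>x. U 1 x t) < \<infinity> \<and>
                  Ws_sq xa xb s (\<lambda>x. V 0 x t) (\<lambda>x. V 1 x t) < \<infinity>) \<and>
       (\<forall>t0\<in>tcl T.
          ((\<lambda>t. Ws_sq xa xb s (\<lambda>x. U 0 x t - U 0 x t0) (\<lambda>x. U 1 x t - U 1 x t0))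
              \<longlongrightarrow> 0) (at t0 within tcl T) \<and>
          ((\<lambda>t. Ws_sq xa xb s (\<lambda>x. V 0 x t - V 0 x t0) (\<lambda>x. V 1 x t - V 1 x t0))
              \<longlongrightarrow> 0) (at t0 within tcl T))) \<and>
    \<comment> \<open>the PDEs in Omega times (0,T)\<close>
    (\<forall>t\<in>tpos T. \<forall>x\<in>{xa<..<xb}.
       ((\<lambda>y. flux_u \<epsilon> \<alpha> n1 D1 chi1 (U 0 y t) (U 1 y t) (U 3 y t) (V 1 y t))
          has_real_derivative
          (Ut x t - 3 * (U 0 x t) ^ 3 / (3 * (U 0 x t)\<^sup>2 + \<epsilon>) * (lam1 - U 0 x t + a1 * V 0 x t))) (at x) \<and>
       ((\<lambda>y. flux_v \<epsilon> \<alpha> n2 D2 chi2 (V 0 y t) (V 1 y t) (V 3 y t) (U 1 y t))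
          has_real_derivative
          (Vt x t - 3 * (V 0 x t) ^ 3 / (3 * (V 0 x t)\<^sup>2 + \<epsilon>) * (lam2 - V 0 x t - a2 * U 0 x t))) (at x)) \<and>
    \<comment> \<open>boundary conditions\<close>
    (\<forall>t\<in>tpos T. \<forall>x\<in>{xa, xb}.
       U 1 x t = 0 \<and> U 3 x t = 0 \<and> V 1 x t = 0 \<and> V 3 x t = 0) \<and>
    \<comment> \<open>maximality (extensibility criterion)\<close>
    (T = \<infinity> \<or>
     Limsup (at_left (real_of_ereal T))
       (\<lambda>t. ereal (sqrt ((LBINT x=xa..xb. (U 0 x t)\<^sup>2) + (LBINT x=xa..xb. (U 1 x t)\<^sup>2)
                         + (LBINT x=xa..xb. (U 2 x t)\<^sup>2))
                 + Sup ((\<lambda>x. 1 / U 0 x t) ` {xa..xb})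
                 + sqrt ((LBINT x=xa..xb. (V 0 x t)\<^sup>2) + (LBINT x=xa..xb. (V 1 x t)\<^sup>2)
                         + (LBINT x=xa..xb. (V 2 x t)\<^sup>2))
                 + Sup ((\<lambda>x. 1 / V 0 x t) ` {xa..xb}))) = \<infinity>)"

end

theory Submission
  imports Defs "HOL-Real_Asymp.Real_Asymp"
begin

(* The weighted mass y(t) = int u + M int v, M = max {a1^2, 1}, satisfies y' <= C - y.  All
   transport terms of the approximating problem are in divergence form with fluxes vanishing on
   the boundary, so y' only sees the reaction terms; pointwise, these plus u + M v are bounded by
   the maximum of a concave quadratic, the cross term a1 u v being absorbed by M >= a1^2.
   Comparison with z' = C - z gives y(t) <= y(0) e^(-t) + C (1 - e^(-t)), and y(0) is bounded
   uniformly in eps because u0, v0 in W^{1,2} are bounded; the limit C is below m_infinity. *)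

(* The approximating problem multiplies the kinetic terms by 3 u^2 / (3 u^2 + eps);
   damped eps u is u times this factor. *)
definition damped :: "real \<Rightarrow> real \<Rightarrow> real" where
  "damped e u = 3 * u ^ 3 / (3 * u\<^sup>2 + e)"

lemma continuous_on_damped [continuous_intros]:
  assumes "continuous_on A f" and "0 < e"
  shows "continuous_on A (\<lambda>x. damped e (f x))"
proof -
  have "3 * (f x)\<^sup>2 + e \<noteq> 0" for x using assms(2) by (smt (verit) zero_le_power2)
  then show ?thesis unfolding damped_def by (intro continuous_intros assms(1)) auto
qed

lemma damped_bounds:
  fixes u e :: real
  assumes u: "0 < u" and e: "0 < e" "e \<le> 1"
  shows "0 < damped e u" and "damped e u \<le> u" and "u - 1 / (2 * sqrt 3) \<le> damped e u"
  unfolding damped_def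
proof -
  have den: "0 < 3 * u\<^sup>2 + e" using e by (simp add: add_nonneg_pos)
  show "0 < 3 * u ^ 3 / (3 * u\<^sup>2 + e)" using den u by simp
  show "3 * u ^ 3 / (3 * u\<^sup>2 + e) \<le> u" using den u e
    by (simp add: divide_simps power2_eq_square power3_eq_cube)
  have "u - 3 * u ^ 3 / (3 * u\<^sup>2 + e) = e * u / (3 * u\<^sup>2 + e)" using den
    by (simp add: field_simps power2_eq_square power3_eq_cube)
  \<comment> \<open>AM-GM: \<open>3 u\<^sup>2 + e \<ge> 2 sqrt (3 e) u \<ge> 2 sqrt 3 e u\<close> because \<open>e \<le> 1\<close>\<close>
  moreover have "2 * sqrt 3 * (e * u) \<le> 3 * u\<^sup>2 + e"
  proof -
    have "0 \<le> (sqrt 3 * u - e)\<^sup>2 + e * (1 - e)" using e by simp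
    also have "\<dots> = 3 * u\<^sup>2 + e - 2 * sqrt 3 * (e * u)" by (simp add: power2_eq_square algebra_simps)
    finally show ?thesis by simp
  qed
  then have "e * u / (3 * u\<^sup>2 + e) \<le> 1 / (2 * sqrt 3)" using den by (simp add: divide_simps mult.commute)
  ultimately show "u - 1 / (2 * sqrt 3) \<le> 3 * u ^ 3 / (3 * u\<^sup>2 + e)" by linarith
qed

definition reaction_bound :: "real \<Rightarrow> real \<Rightarrow> real \<Rightarrow> real" where
  "reaction_bound l1 l2 M = (l1 + 1 / (2 * sqrt 3) + 1)\<^sup>2 / 2 + M * (l2 + 1 / (2 * sqrt 3) + 1)\<^sup>2 / 2"

lemma reaction_mass_bound:
  fixes u v e a1 a2 l1 l2 M :: real
  assumes u: "0 < u" and v: "0 < v" and e: "0 < e" "e \<le> 1"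
    and a: "0 \<le> a1" "0 \<le> a2" and l: "0 \<le> l1" "0 \<le> l2" and M: "a1\<^sup>2 \<le> M"
  shows "damped e u * (l1 - u + a1 * v) + M * (damped e v * (l2 - v - a2 * u)) + u + M * v
         \<le> reaction_bound l1 l2 M"
proof -
  define c where "c = 1 / (2 * sqrt 3)"
  define f where "f = damped e u"
  define g where "g = damped e v"
  have f: "0 < f" "f \<le> u" "u - c \<le> f" using damped_bounds[OF u e] unfolding f_def c_def by auto
  have g: "0 < g" "g \<le> v" "v - c \<le> g" using damped_bounds[OF v e] unfolding g_def c_def by auto
  have M0: "0 \<le> M" using M zero_le_power2 order_trans by blast
  have fu: "f * (l1 - u + a1 * v) \<le> l1 * u - (u - c) * u + a1 * u * v"
  proof -
    have "f * l1 \<le> u * l1" "(u - c) * u \<le> f * u" "f * (a1 * v) \<le> u * (a1 * v)"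
      using f u a v l by (simp_all add: mult_right_mono)
    then show ?thesis by (simp add: algebra_simps)
  qed
  have gv: "g * (l2 - v - a2 * u) \<le> l2 * v - (v - c) * v"
  proof -
    have "g * l2 \<le> v * l2" "(v - c) * v \<le> g * v" "0 \<le> g * (a2 * u)"
      using g u a v l by (simp_all add: mult_right_mono)
    then show ?thesis by (simp add: algebra_simps)
  qed
  have cross: "a1 * u * v \<le> u\<^sup>2 / 2 + M * v\<^sup>2 / 2"
  proof -
    have "a1 * u * v \<le> u\<^sup>2 / 2 + a1\<^sup>2 * v\<^sup>2 / 2"
      using zero_le_power2[of "u - a1 * v"] by (simp add: power2_eq_square algebra_simps)
    moreover have "a1\<^sup>2 * v\<^sup>2 \<le> M * v\<^sup>2" using M by (simp add: mult_right_mono)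
    ultimately show ?thesis by simp
  qed
  have "f * (l1 - u + a1 * v) + M * (g * (l2 - v - a2 * u)) + u + M * v
      \<le> ((l1 + c + 1) * u - u\<^sup>2 / 2) + M * ((l2 + c + 1) * v - v\<^sup>2 / 2)"
    using fu cross mult_left_mono[OF gv M0] by (simp add: algebra_simps power2_eq_square)
  also have "\<dots> \<le> (l1 + c + 1)\<^sup>2 / 2 + M * ((l2 + c + 1)\<^sup>2 / 2)"
  proof -
    have peak: "(l + c + 1) * w - w\<^sup>2 / 2 \<le> (l + c + 1)\<^sup>2 / 2" for l w :: real
      using zero_le_power2[of "w - (l + c + 1)"] by (simp add: power2_eq_square algebra_simps)
    show ?thesis using add_mono[OF peak mult_left_mono[OF peak M0]] .
  qed
  finally show ?thesis unfolding f_def g_def c_def reaction_bound_def by simp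
qed

lemma scaled_reaction_bound_le:
  fixes L l1 l2 M a2 :: real
  assumes "0 \<le> L" "0 \<le> l1" "0 \<le> M" "0 \<le> a2"
  shows "L * reaction_bound l1 l2 M
      \<le> L / 2 * (l1 + 1 / (2 * sqrt 3) + 1 + M * a2 / (2 * sqrt 3))\<^sup>2 + L / 2 * (l2 + 1 / (2 * sqrt 3) + 1)\<^sup>2 * M"
proof -
  define A where "A = l1 + 1 / (2 * sqrt 3) + 1"
  have "A\<^sup>2 \<le> (A + M * a2 / (2 * sqrt 3))\<^sup>2"
    using assms unfolding A_def by (intro power_mono) auto
  then have "L / 2 * A\<^sup>2 \<le> L / 2 * (A + M * a2 / (2 * sqrt 3))\<^sup>2"
    using assms(1) by (intro mult_left_mono) auto
  then show ?thesis unfolding reaction_bound_def A_def[symmetric] by (simp add: algebra_simps)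
qed

lemma differential_inequality_exp_bound:
  fixes y y' :: "real \<Rightarrow> real" and C t :: real
  assumes t: "0 < t" and cont: "continuous_on {0..t} y"
    and deriv: "\<And>s. 0 < s \<Longrightarrow> s < t \<Longrightarrow> (y has_real_derivative y' s) (at s)"
    and le: "\<And>s. 0 < s \<Longrightarrow> s < t \<Longrightarrow> y' s \<le> C - y s"
  shows "y t \<le> y 0 * exp (- t) + C * (1 - exp (- t))"
proof -
  define z where "z s = (y s - C) * exp s" for s
  have z_deriv: "(z has_real_derivative (y' s + y s - C) * exp s) (at s)" if "0 < s" "s < t" for s
    unfolding z_def[abs_def] using deriv[OF that]
    by (auto intro!: derivative_eq_intros simp: algebra_simps)
  have "continuous_on {0..t} z" unfolding z_def by (intro continuous_intros cont)
  then obtain l w where w: "0 < w" "w < t" "(z has_real_derivative l) (at w)" "z t - z 0 = (t - 0) * l"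
    using MVT[OF t] z_deriv by (meson real_differentiable_def)
  have "l = (y' w + y w - C) * exp w" using DERIV_unique[OF w(3) z_deriv[OF w(1,2)]] .
  also have "\<dots> \<le> 0" using le[OF w(1,2)] by (simp add: mult_nonpos_nonneg)
  finally have "(t - 0) * l \<le> 0" using t by (simp add: mult_nonneg_nonpos)
  with w(4) have "z t \<le> z 0" by linarith
  then have "y t - C \<le> (y 0 - C) * exp (- t)" unfolding z_def by (simp add: exp_minus field_simps)
  then show ?thesis by (simp add: algebra_simps)
qed

lemma bounded_exp_decay:
  fixes Y C :: real
  shows "bounded ((\<lambda>t. Y * exp (- t) + C) ` {0<..})"
  unfolding bounded_iff
proof (intro exI ballI)
  fix z assume "z \<in> (\<lambda>t. Y * exp (- t) + C) ` {0<..}"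
  then obtain t where t: "0 < t" "z = Y * exp (- t) + C" by auto
  then have "\<bar>Y * exp (- t)\<bar> \<le> \<bar>Y\<bar>" by (simp add: abs_mult mult_left_le)
  then show "norm z \<le> \<bar>Y\<bar> + \<bar>C\<bar>" using t(2) abs_triangle_ineq[of "Y * exp (- t)" C] by simp
qed

lemma Limsup_exp_decay:
  fixes Y C :: real
  shows "Limsup at_top (\<lambda>t. ereal (Y * exp (- t) + C)) = ereal C"
proof (rule lim_imp_Limsup)
  have "((\<lambda>t. Y * exp (- t) + C) \<longlongrightarrow> C) at_top" by real_asymp
  then show "((\<lambda>t. ereal (Y * exp (- t) + C)) \<longlongrightarrow> ereal C) at_top" by (simp add: lim_ereal)
qed simp

lemma L2sq_eq_integral:
  assumes "continuous_on {xa..xb} h"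
  shows "L2sq xa xb h = ennreal (integral {xa..xb} (\<lambda>x. (h x)\<^sup>2))"
proof -
  have "((\<lambda>x. (h x)\<^sup>2) has_integral integral {xa..xb} (\<lambda>x. (h x)\<^sup>2)) {xa..xb}"
    by (intro integrable_integral integrable_continuous_interval continuous_intros assms)
  from nn_integral_has_integral_lebesgue'[OF _ this] show ?thesis
    unfolding L2sq_def by (simp add: mult.commute)
qed

lemma abs_integral_le_L2:
  fixes h :: "real \<Rightarrow> real"
  assumes ab: "xa \<le> xb" and h: "continuous_on {xa..xb} h" and d: "0 < d"
  shows "\<bar>integral {xa..xb} h\<bar> \<le> d / 2 * (xb - xa) + integral {xa..xb} (\<lambda>x. (h x)\<^sup>2) / (2 * d)"
proof -
  have h2: "(\<lambda>x. (h x)\<^sup>2) integrable_on {xa..xb}"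
    by (intro integrable_continuous_interval continuous_intros h)
  have young: "\<bar>r\<bar> \<le> d / 2 + r\<^sup>2 / (2 * d)" for r :: real
  proof -
    have "2 * d * \<bar>r\<bar> \<le> r\<^sup>2 + d\<^sup>2"
      using zero_le_power2[of "\<bar>r\<bar> - d"] by (simp add: power2_eq_square algebra_simps)
    then show ?thesis using d by (simp add: field_simps power2_eq_square)
  qed
  have "(\<lambda>x. d / 2 + (h x)\<^sup>2 / (2 * d)) integrable_on {xa..xb}"
    using d by (intro integrable_continuous_interval continuous_intros h) auto
  then have "\<bar>integral {xa..xb} h\<bar> \<le> integral {xa..xb} (\<lambda>x. d / 2 + (h x)\<^sup>2 / (2 * d))"
    using integral_norm_bound_integral[OF integrable_continuous_interval[OF h]] young by simp
  also have "\<dots> = d / 2 * (xb - xa) + integral {xa..xb} (\<lambda>x. (h x)\<^sup>2) / (2 * d)"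
    using ab h2 by (subst integral_add) (auto simp: integral_divide integrable_on_divide)
  finally show ?thesis .
qed

lemma tendsto_integral_of_L2sq_tendsto_0:
  fixes h :: "'a \<Rightarrow> real \<Rightarrow> real"
  assumes ab: "xa < xb" and cont: "eventually (\<lambda>s. continuous_on {xa..xb} (h s)) F"
    and lim: "((\<lambda>s. L2sq xa xb (h s)) \<longlongrightarrow> 0) F"
  shows "((\<lambda>s. integral {xa..xb} (h s)) \<longlongrightarrow> 0) F"
proof (rule tendstoI)
  fix e :: real assume e: "0 < e"
  define d where "d = e / (xb - xa)"
  have d: "0 < d" and dL: "d * (xb - xa) = e" using e ab by (simp_all add: d_def)
  have "eventually (\<lambda>s. L2sq xa xb (h s) < ennreal (d * e)) F"
    using order_tendstoD(2)[OF lim, of "ennreal (d * e)"] d e by simp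
  with cont show "eventually (\<lambda>s. dist (integral {xa..xb} (h s)) 0 < e) F"
  proof eventually_elim
    case (elim s)
    then have "ennreal (integral {xa..xb} (\<lambda>x. (h s x)\<^sup>2)) < ennreal (d * e)"
      by (simp add: L2sq_eq_integral)
    moreover have "0 \<le> integral {xa..xb} (\<lambda>x. (h s x)\<^sup>2)"
      using elim by (intro integral_nonneg integrable_continuous_interval continuous_intros) auto
    ultimately have "integral {xa..xb} (\<lambda>x. (h s x)\<^sup>2) < d * e" by (simp add: ennreal_less_iff)
    then have "integral {xa..xb} (\<lambda>x. (h s x)\<^sup>2) / (2 * d) < d * e / (2 * d)"
      using d by (intro divide_strict_right_mono) auto
    moreover have "\<bar>integral {xa..xb} (h s)\<bar>
        \<le> d / 2 * (xb - xa) + integral {xa..xb} (\<lambda>x. (h s x)\<^sup>2) / (2 * d)"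
      using ab elim d by (intro abs_integral_le_L2) auto
    ultimately have "\<bar>integral {xa..xb} (h s)\<bar> < d / 2 * (xb - xa) + d * e / (2 * d)" by linarith
    also have "\<dots> = e" using dL d by (simp add: field_simps)
    finally show ?case by simp
  qed
qed

lemma L2sq_le_Ws_sq: "L2sq xa xb f \<le> Ws_sq xa xb s f f'"
  unfolding Ws_sq_def add.assoc by (rule add_increasing2) simp_all

lemma tendsto_integral_of_Ws_sq_tendsto_0:
  fixes f f' :: "real \<Rightarrow> 'a \<Rightarrow> real"
  assumes ab: "xa < xb"
    and cont: "eventually (\<lambda>t. continuous_on {xa..xb} (\<lambda>x. f x t)) F"
    and cont0: "continuous_on {xa..xb} (\<lambda>x. f x t0)"
    and lim: "((\<lambda>t. Ws_sq xa xb s (\<lambda>x. f x t - f x t0) (\<lambda>x. f' x t - f' x t0)) \<longlongrightarrow> 0) F"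
  shows "((\<lambda>t. integral {xa..xb} (\<lambda>x. f x t)) \<longlongrightarrow> integral {xa..xb} (\<lambda>x. f x t0)) F"
proof -
  have "((\<lambda>t. L2sq xa xb (\<lambda>x. f x t - f x t0)) \<longlongrightarrow> 0) F"
    by (rule tendsto_sandwich[OF _ _ tendsto_const lim]) (simp_all add: L2sq_le_Ws_sq)
  moreover have "eventually (\<lambda>t. continuous_on {xa..xb} (\<lambda>x. f x t - f x t0)) F"
    using cont by eventually_elim (rule continuous_on_diff[OF _ cont0])
  ultimately have "((\<lambda>t. integral {xa..xb} (\<lambda>x. f x t - f x t0)) \<longlongrightarrow> 0) F"
    by (rule tendsto_integral_of_L2sq_tendsto_0[OF ab, rotated])
  moreover have "eventually (\<lambda>t. integral {xa..xb} (\<lambda>x. f x t - f x t0)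
      = integral {xa..xb} (\<lambda>x. f x t) - integral {xa..xb} (\<lambda>x. f x t0)) F"
    using cont by eventually_elim (simp add: integral_diff integrable_continuous_interval cont0)
  ultimately have "((\<lambda>t. integral {xa..xb} (\<lambda>x. f x t) - integral {xa..xb} (\<lambda>x. f x t0)) \<longlongrightarrow> 0) F"
    by (rule Lim_transform_eventually)
  then show ?thesis by (rule LIM_zero_cancel)
qed

lemma integral_le_of_le_on_open_interval:
  fixes h :: "real \<Rightarrow> real"
  assumes ab: "xa \<le> xb" and h: "continuous_on {xa..xb} h" and le: "\<And>x. x \<in> {xa<..<xb} \<Longrightarrow> h x \<le> B"
  shows "integral {xa..xb} h \<le> B * (xb - xa)"
proof -
  have "(h has_integral integral {xa..xb} h) {xa<..<xb}"
    using integrable_integral[OF integrable_continuous_interval[OF h]] by (simp add: has_integral_Icc_iff_Ioo)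
  moreover have "((\<lambda>x. B) has_integral B * (xb - xa)) {xa<..<xb}"
    using ab has_integral_const_real[of B xa xb] by (simp add: has_integral_Icc_iff_Ioo mult.commute)
  ultimately show ?thesis using le by (rule has_integral_le)
qed

lemma W12_bounded_above:
  assumes "W12 xa xb f g"
  shows "\<exists>B. \<forall>x\<in>{xa..xb}. f x \<le> B"
proof -
  have g: "set_integrable lborel {xa..xb} g" and f: "\<forall>x\<in>{xa..xb}. f x = f xa + (LBINT y=xa..x. g y)"
    using assms unfolding W12_def by blast+
  have abs_g: "set_integrable lborel {xa..xb} (\<lambda>y. \<bar>g y\<bar>)" using set_integrable_abs[OF g] by simp
  have "f x \<le> f xa + integral {xa..xb} (\<lambda>y. \<bar>g y\<bar>)" if x: "x \<in> {xa..xb}" for x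
  proof -
    have sub: "{xa..x} \<subseteq> {xa..xb}" using x by auto
    have gx: "set_integrable lborel {xa..x} g" by (rule set_integrable_subset[OF g _ sub]) simp
    have abs_gx: "set_integrable lborel {xa..x} (\<lambda>y. \<bar>g y\<bar>)"
      by (rule set_integrable_subset[OF abs_g _ sub]) simp
    have "(LBINT y=xa..x. g y) = integral {xa..x} g"
      using x gx by (intro interval_integral_eq_integral) auto
    also have "\<dots> \<le> integral {xa..x} (\<lambda>y. \<bar>g y\<bar>)"
      by (rule integral_le[OF set_borel_integral_eq_integral(1)[OF gx]
            set_borel_integral_eq_integral(1)[OF abs_gx]]) simp
    also have "\<dots> \<le> integral {xa..xb} (\<lambda>y. \<bar>g y\<bar>)"
      by (rule integral_subset_le[OF sub set_borel_integral_eq_integral(1)[OF abs_gx]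
            set_borel_integral_eq_integral(1)[OF abs_g]]) simp
    finally have "(LBINT y=xa..x. g y) \<le> integral {xa..xb} (\<lambda>y. \<bar>g y\<bar>)" .
    moreover have "f x = f xa + (LBINT y=xa..x. g y)" using f x by blast
    ultimately show ?thesis by linarith
  qed
  then show ?thesis by blast
qed

lemma continuous_on_slice:
  assumes "continuous_on (A \<times> B) (\<lambda>(x, t). f x t)" and "t \<in> B"
  shows "continuous_on A (\<lambda>x. f x t)"
proof -
  have "continuous_on A (\<lambda>x. (\<lambda>(x, t). f x t) (x, t))"
    by (rule continuous_on_compose2[OF assms(1)]) (use assms(2) in \<open>auto intro!: continuous_intros\<close>)
  then show ?thesis by simp
qed

lemma continuous_on_swap_args:
  assumes "continuous_on (A \<times> B) (\<lambda>(x, t). f x t)"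
  shows "continuous_on (B \<times> A) (\<lambda>(t, x). f x t)"
proof -
  have "continuous_on (B \<times> A) (\<lambda>p. (\<lambda>(x, t). f x t) (snd p, fst p))"
    by (rule continuous_on_compose2[OF assms]) (auto intro!: continuous_intros)
  then show ?thesis by (simp add: case_prod_beta')
qed

lemma has_real_derivative_integral_parametric:
  fixes f ft :: "real \<Rightarrow> real \<Rightarrow> real"
  assumes S: "open S" "s \<in> S"
    and deriv: "\<And>x r. x \<in> {a..b} \<Longrightarrow> r \<in> S \<Longrightarrow> ((\<lambda>r. f x r) has_real_derivative ft x r) (at r)"
    and cont: "continuous_on ({a..b} \<times> S) (\<lambda>(x, r). ft x r)"
    and int: "\<And>r. r \<in> S \<Longrightarrow> (\<lambda>x. f x r) integrable_on {a..b}"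
  shows "((\<lambda>r. integral {a..b} (\<lambda>x. f x r)) has_real_derivative integral {a..b} (\<lambda>x. ft x s)) (at s)"
proof -
  obtain d where d: "0 < d" "cball s d \<subseteq> S" using S unfolding open_contains_cball by blast
  have "((\<lambda>r. integral (cbox a b) (\<lambda>x. f x r)) has_field_derivative integral (cbox a b) (\<lambda>x. ft x s))
      (at s within cball s d)"
  proof (rule leibniz_rule_field_derivative[where f = "\<lambda>r x. f x r" and fx = "\<lambda>r x. ft x r"])
    fix r x assume "r \<in> cball s d" "x \<in> cbox a b"
    then have "((\<lambda>r. f x r) has_real_derivative ft x r) (at r)"
      using d(2) unfolding cbox_interval by (intro deriv) auto
    then show "((\<lambda>r. f x r) has_field_derivative ft x r) (at r within cball s d)"
      by (rule has_field_derivative_at_within)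
  next
    fix r assume "r \<in> cball s d"
    then show "(\<lambda>x. f x r) integrable_on cbox a b" using d(2) int unfolding cbox_interval by blast
  next
    have "cball s d \<times> cbox a b \<subseteq> S \<times> {a..b}" using d(2) unfolding cbox_interval by blast
    then show "continuous_on (cball s d \<times> cbox a b) (\<lambda>(r, x). ft x r)"
      by (rule continuous_on_subset[OF continuous_on_swap_args[OF cont]])
  next
    show "s \<in> cball s d" using d(1) by simp
  qed (rule convex_cball)
  moreover have "at s within cball s d = at s" using d(1) by (intro at_within_interior) simp
  ultimately show ?thesis unfolding cbox_interval by simp
qed

lemma integral_eq_of_zero_flux:
  fixes F g r :: "real \<Rightarrow> real"
  assumes ab: "a \<le> b" and F: "continuous_on {a..b} F" "F a = 0" "F b = 0"
    and deriv: "\<And>x. x \<in> {a<..<b} \<Longrightarrow> (F has_real_derivative g x - r x) (at x)"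
    and int: "g integrable_on {a..b}" "r integrable_on {a..b}"
  shows "integral {a..b} g = integral {a..b} r"
proof -
  have "((\<lambda>x. g x - r x) has_integral F b - F a) {a..b}"
    using ab F(1) deriv by (intro fundamental_theorem_of_calculus_interior)
      (auto simp: has_real_derivative_iff_has_vector_derivative)
  then have "integral {a..b} (\<lambda>x. g x - r x) = 0" using F by (simp add: integral_unique)
  then show ?thesis using int by (simp add: integral_diff)
qed

lemma has_real_derivative_integral_balance_law:
  fixes W Wt :: "real \<Rightarrow> real \<Rightarrow> real" and F R :: "real \<Rightarrow> real"
  assumes ab: "a \<le> b" and S: "open S" "s \<in> S"
    and deriv: "\<And>x r. x \<in> {a..b} \<Longrightarrow> r \<in> S \<Longrightarrow> ((\<lambda>r. W x r) has_real_derivative Wt x r) (at r)"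
    and Wt_cont: "continuous_on ({a..b} \<times> S) (\<lambda>(x, r). Wt x r)"
    and W_cont: "\<And>r. r \<in> S \<Longrightarrow> continuous_on {a..b} (\<lambda>x. W x r)"
    and R_cont: "continuous_on {a..b} R"
    and F: "continuous_on {a..b} F" "F a = 0" "F b = 0"
    and balance: "\<And>x. x \<in> {a<..<b} \<Longrightarrow> (F has_real_derivative Wt x s - R x) (at x)"
  shows "((\<lambda>r. integral {a..b} (\<lambda>x. W x r)) has_real_derivative integral {a..b} R) (at s)"
proof -
  have "integral {a..b} (\<lambda>x. Wt x s) = integral {a..b} R"
    using continuous_on_slice[OF Wt_cont S(2)] R_cont
    by (intro integral_eq_of_zero_flux[OF ab F balance] integrable_continuous_interval)
  moreover have "((\<lambda>r. integral {a..b} (\<lambda>x. W x r)) has_real_derivative integral {a..b} (\<lambda>x. Wt x s)) (at s)"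
    using S deriv Wt_cont W_cont
    by (intro has_real_derivative_integral_parametric) (auto intro: integrable_continuous_interval)
  ultimately show ?thesis by simp
qed

lemma continuous_on_flux_u:
  assumes "0 < \<epsilon>" and u: "continuous_on A u" "\<And>x. x \<in> A \<Longrightarrow> 0 < u x"
    and "continuous_on A ux" "continuous_on A uxxx" "continuous_on A vx"
  shows "continuous_on A (\<lambda>x. flux_u \<epsilon> \<alpha> n D chi (u x) (ux x) (uxxx x) (vx x))"
proof -
  have "u x powr (4 - n) + \<epsilon> \<noteq> 0" for x using assms(1) by (smt (verit) powr_ge_zero)
  moreover have "u x \<noteq> 0" if "x \<in> A" for x using u(2)[OF that] by simp
  ultimately show ?thesis unfolding flux_u_def by (intro continuous_intros assms(2,4,5,6)) auto
qed

lemma continuous_on_flux_v: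
  assumes "0 < \<epsilon>" and v: "continuous_on A v" "\<And>x. x \<in> A \<Longrightarrow> 0 < v x"
    and "continuous_on A vx" "continuous_on A vxxx" "continuous_on A ux"
  shows "continuous_on A (\<lambda>x. flux_v \<epsilon> \<alpha> n D chi (v x) (vx x) (vxxx x) (ux x))"
proof -
  have "v x powr (4 - n) + \<epsilon> \<noteq> 0" for x using assms(1) by (smt (verit) powr_ge_zero)
  moreover have "v x \<noteq> 0" if "x \<in> A" for x using v(2)[OF that] by simp
  ultimately show ?thesis unfolding flux_v_def by (intro continuous_intros assms(2,4,5,6)) auto
qed

lemma tpos_subset_tcl: "tpos T \<subseteq> tcl T"
  by (auto simp: tpos_def tcl_def)

lemma open_tpos: "open (tpos T)"
  unfolding tpos_def by (intro open_Collect_conj open_Collect_less continuous_intros)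

context
  fixes xa xb D1 D2 a1 a2 lam1 lam2 chi1 chi2 \<alpha> n1 n2 \<epsilon> :: real
    and U0 V0 :: "real \<Rightarrow> real" and T :: ereal
    and U V :: "nat \<Rightarrow> real \<Rightarrow> real \<Rightarrow> real" and Ut Vt :: "real \<Rightarrow> real \<Rightarrow> real"
  assumes Omega: "xa < xb" and eps: "0 < \<epsilon>"
    and sol: "approx_sol xa xb D1 D2 a1 a2 lam1 lam2 chi1 chi2 \<alpha> n1 n2 \<epsilon> U0 V0 T U Ut V Vt"
begin

lemma approx_sol_pos:
  assumes "x \<in> {xa..xb}" "t \<in> tcl T"
  shows "0 < U 0 x t" "0 < V 0 x t"
  using sol assms unfolding approx_sol_def by blast+

lemma approx_sol_continuous_on_slice:
  assumes "t \<in> tcl T"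
  shows "continuous_on {xa..xb} (\<lambda>x. U 0 x t)" "continuous_on {xa..xb} (\<lambda>x. V 0 x t)"
proof -
  have "\<forall>x\<in>{xa..xb}. ((\<lambda>y. U 0 y t) has_real_derivative U 1 x t) (at x within {xa..xb}) \<and>
      ((\<lambda>y. V 0 y t) has_real_derivative V 1 x t) (at x within {xa..xb})"
    using sol assms unfolding approx_sol_def by blast
  then show "continuous_on {xa..xb} (\<lambda>x. U 0 x t)" "continuous_on {xa..xb} (\<lambda>x. V 0 x t)"
    by (auto simp: continuous_on_eq_continuous_within intro: DERIV_continuous)
qed

lemma approx_sol_u_mass_has_derivative:
  assumes s: "s \<in> tpos T"
  shows "((\<lambda>s. integral {xa..xb} (\<lambda>x. U 0 x s)) has_real_derivative
      integral {xa..xb} (\<lambda>x. damped \<epsilon> (U 0 x s) * (lam1 - U 0 x s + a1 * V 0 x s))) (at s)"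
proof -
  have Ut: "\<forall>r\<in>tpos T. \<forall>x\<in>{xa..xb}. ((\<lambda>r. U 0 x r) has_real_derivative Ut x r) (at r)"
    and Ut_cont: "continuous_on ({xa..xb} \<times> tpos T) (\<lambda>(x, t). Ut x t)"
    and UV_cont: "\<forall>j\<le>4. continuous_on ({xa..xb} \<times> tpos T) (\<lambda>(x, t). U j x t) \<and>
                          continuous_on ({xa..xb} \<times> tpos T) (\<lambda>(x, t). V j x t)"
    and pde: "\<forall>x\<in>{xa<..<xb}. ((\<lambda>y. flux_u \<epsilon> \<alpha> n1 D1 chi1 (U 0 y s) (U 1 y s) (U 3 y s) (V 1 y s))
        has_real_derivative Ut x s - damped \<epsilon> (U 0 x s) * (lam1 - U 0 x s + a1 * V 0 x s)) (at x)"
    and bc: "\<forall>x\<in>{xa, xb}. U 1 x s = 0 \<and> U 3 x s = 0 \<and> V 1 x s = 0 \<and> V 3 x s = 0"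
    using sol s unfolding approx_sol_def damped_def[symmetric] by blast+
  have slice: "continuous_on {xa..xb} (\<lambda>x. U j x s)" "continuous_on {xa..xb} (\<lambda>x. V j x s)"
    if "j \<le> 4" for j
    using UV_cont that by (auto intro: continuous_on_slice[OF _ s])
  have s_tcl: "s \<in> tcl T" using s tpos_subset_tcl by blast
  show ?thesis
  proof (rule has_real_derivative_integral_balance_law[OF _ open_tpos s])
    show "continuous_on {xa..xb} (\<lambda>y. flux_u \<epsilon> \<alpha> n1 D1 chi1 (U 0 y s) (U 1 y s) (U 3 y s) (V 1 y s))"
      using eps approx_sol_pos(1)[OF _ s_tcl] slice by (intro continuous_on_flux_u) auto
    show "continuous_on {xa..xb} (\<lambda>x. damped \<epsilon> (U 0 x s) * (lam1 - U 0 x s + a1 * V 0 x s))"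
      using eps slice[of 0] by (intro continuous_intros) auto
    show "continuous_on {xa..xb} (\<lambda>x. U 0 x r)" if "r \<in> tpos T" for r
      using approx_sol_continuous_on_slice that tpos_subset_tcl by blast
  qed (use Omega Ut Ut_cont pde bc in \<open>auto simp: flux_u_def\<close>)
qed

lemma approx_sol_v_mass_has_derivative:
  assumes s: "s \<in> tpos T"
  shows "((\<lambda>s. integral {xa..xb} (\<lambda>x. V 0 x s)) has_real_derivative
      integral {xa..xb} (\<lambda>x. damped \<epsilon> (V 0 x s) * (lam2 - V 0 x s - a2 * U 0 x s))) (at s)"
proof -
  have Vt: "\<forall>r\<in>tpos T. \<forall>x\<in>{xa..xb}. ((\<lambda>r. V 0 x r) has_real_derivative Vt x r) (at r)"
    and Vt_cont: "continuous_on ({xa..xb} \<times> tpos T) (\<lambda>(x, t). Vt x t)"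
    and UV_cont: "\<forall>j\<le>4. continuous_on ({xa..xb} \<times> tpos T) (\<lambda>(x, t). U j x t) \<and>
                          continuous_on ({xa..xb} \<times> tpos T) (\<lambda>(x, t). V j x t)"
    and pde: "\<forall>x\<in>{xa<..<xb}. ((\<lambda>y. flux_v \<epsilon> \<alpha> n2 D2 chi2 (V 0 y s) (V 1 y s) (V 3 y s) (U 1 y s))
        has_real_derivative Vt x s - damped \<epsilon> (V 0 x s) * (lam2 - V 0 x s - a2 * U 0 x s)) (at x)"
    and bc: "\<forall>x\<in>{xa, xb}. U 1 x s = 0 \<and> U 3 x s = 0 \<and> V 1 x s = 0 \<and> V 3 x s = 0"
    using sol s unfolding approx_sol_def damped_def[symmetric] by blast+
  have slice: "continuous_on {xa..xb} (\<lambda>x. U j x s)" "continuous_on {xa..xb} (\<lambda>x. V j x s)"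
    if "j \<le> 4" for j
    using UV_cont that by (auto intro: continuous_on_slice[OF _ s])
  have s_tcl: "s \<in> tcl T" using s tpos_subset_tcl by blast
  show ?thesis
  proof (rule has_real_derivative_integral_balance_law[OF _ open_tpos s])
    show "continuous_on {xa..xb} (\<lambda>y. flux_v \<epsilon> \<alpha> n2 D2 chi2 (V 0 y s) (V 1 y s) (V 3 y s) (U 1 y s))"
      using eps approx_sol_pos(2)[OF _ s_tcl] slice by (intro continuous_on_flux_v) auto
    show "continuous_on {xa..xb} (\<lambda>x. damped \<epsilon> (V 0 x s) * (lam2 - V 0 x s - a2 * U 0 x s))"
      using eps slice[of 0] by (intro continuous_intros) auto
    show "continuous_on {xa..xb} (\<lambda>x. V 0 x r)" if "r \<in> tpos T" for r
      using approx_sol_continuous_on_slice that tpos_subset_tcl by blast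
  qed (use Omega Vt Vt_cont pde bc in \<open>auto simp: flux_v_def\<close>)
qed

lemma approx_sol_mass_continuous_at_0:
  shows "((\<lambda>s. integral {xa..xb} (\<lambda>x. U 0 x s)) \<longlongrightarrow> integral {xa..xb} (\<lambda>x. U 0 x 0)) (at 0 within tcl T)"
    and "((\<lambda>s. integral {xa..xb} (\<lambda>x. V 0 x s)) \<longlongrightarrow> integral {xa..xb} (\<lambda>x. V 0 x 0)) (at 0 within tcl T)"
proof -
  have "0 < T" using sol unfolding approx_sol_def by blast
  then have zero: "0 \<in> tcl T" by (simp add: tcl_def zero_ereal_def)
  \<comment> \<open>continuity at \<open>t = 0\<close> comes from \<open>C\<^sup>0([0,T); W\<^sup>s\<^sup>,\<^sup>2)\<close>, for any \<open>s \<in> (3/2, 2)\<close>\<close>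
  have Ws: "((\<lambda>t. Ws_sq xa xb (7/4) (\<lambda>x. U 0 x t - U 0 x 0) (\<lambda>x. U 1 x t - U 1 x 0)) \<longlongrightarrow> 0) (at 0 within tcl T)"
      "((\<lambda>t. Ws_sq xa xb (7/4) (\<lambda>x. V 0 x t - V 0 x 0) (\<lambda>x. V 1 x t - V 1 x 0)) \<longlongrightarrow> 0) (at 0 within tcl T)"
    using sol zero unfolding approx_sol_def by (simp_all add: Ball_def)
  have "eventually (\<lambda>t. continuous_on {xa..xb} (\<lambda>x. U 0 x t) \<and> continuous_on {xa..xb} (\<lambda>x. V 0 x t)) (at 0 within tcl T)"
    using approx_sol_continuous_on_slice by (auto simp: eventually_at_filter intro!: always_eventually)
  then show "((\<lambda>s. integral {xa..xb} (\<lambda>x. U 0 x s)) \<longlongrightarrow> integral {xa..xb} (\<lambda>x. U 0 x 0)) (at 0 within tcl T)"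
    and "((\<lambda>s. integral {xa..xb} (\<lambda>x. V 0 x s)) \<longlongrightarrow> integral {xa..xb} (\<lambda>x. V 0 x 0)) (at 0 within tcl T)"
    using Ws approx_sol_continuous_on_slice[OF zero]
    by (auto intro!: tendsto_integral_of_Ws_sq_tendsto_0[OF Omega] elim: eventually_mono)
qed

lemma approx_sol_reaction_integral_le:
  assumes params: "0 \<le> a1" "0 \<le> a2" "0 \<le> lam1" "0 \<le> lam2" and eps1: "\<epsilon> \<le> 1"
    and M: "a1\<^sup>2 \<le> M" and s: "s \<in> tpos T"
  shows "integral {xa..xb} (\<lambda>x. damped \<epsilon> (U 0 x s) * (lam1 - U 0 x s + a1 * V 0 x s))
        + M * integral {xa..xb} (\<lambda>x. damped \<epsilon> (V 0 x s) * (lam2 - V 0 x s - a2 * U 0 x s))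
      \<le> (xb - xa) * reaction_bound lam1 lam2 M
        - (integral {xa..xb} (\<lambda>x. U 0 x s) + M * integral {xa..xb} (\<lambda>x. V 0 x s))"
proof -
  let ?K = "reaction_bound lam1 lam2 M"
  have s_tcl: "s \<in> tcl T" using s tpos_subset_tcl by blast
  note cont = approx_sol_continuous_on_slice[OF s_tcl]
  have "((\<lambda>x. damped \<epsilon> (U 0 x s) * (lam1 - U 0 x s + a1 * V 0 x s)
            + M * (damped \<epsilon> (V 0 x s) * (lam2 - V 0 x s - a2 * U 0 x s)) + U 0 x s + M * V 0 x s)
      has_integral
        integral {xa..xb} (\<lambda>x. damped \<epsilon> (U 0 x s) * (lam1 - U 0 x s + a1 * V 0 x s))
        + M * integral {xa..xb} (\<lambda>x. damped \<epsilon> (V 0 x s) * (lam2 - V 0 x s - a2 * U 0 x s))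
        + integral {xa..xb} (\<lambda>x. U 0 x s) + M * integral {xa..xb} (\<lambda>x. V 0 x s)) {xa..xb}"
    using eps cont
    by (intro has_integral_add has_integral_mult_right integrable_integral integrable_continuous_interval
          continuous_intros)
  moreover have "((\<lambda>x. ?K) has_integral (xb - xa) * ?K) {xa..xb}"
    using Omega has_integral_const_real[of ?K xa xb] by (simp add: mult.commute)
  moreover have "damped \<epsilon> (U 0 x s) * (lam1 - U 0 x s + a1 * V 0 x s)
        + M * (damped \<epsilon> (V 0 x s) * (lam2 - V 0 x s - a2 * U 0 x s)) + U 0 x s + M * V 0 x s \<le> ?K"
    if "x \<in> {xa..xb}" for x
    using approx_sol_pos[OF that s_tcl] eps eps1 params M by (intro reaction_mass_bound)
  ultimately show ?thesis by (smt (verit) has_integral_le)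
qed

lemma approx_sol_weighted_mass_le:
  assumes params: "0 \<le> a1" "0 \<le> a2" "0 \<le> lam1" "0 \<le> lam2" and eps1: "\<epsilon> \<le> 1"
    and M: "a1\<^sup>2 \<le> M" and t: "t \<in> tpos T"
  shows "integral {xa..xb} (\<lambda>x. U 0 x t) + M * integral {xa..xb} (\<lambda>x. V 0 x t)
      \<le> (integral {xa..xb} (\<lambda>x. U 0 x 0) + M * integral {xa..xb} (\<lambda>x. V 0 x 0)) * exp (- t)
        + (xb - xa) * reaction_bound lam1 lam2 M * (1 - exp (- t))"
proof -
  define y where "y s = integral {xa..xb} (\<lambda>x. U 0 x s) + M * integral {xa..xb} (\<lambda>x. V 0 x s)" for s
  define y' where "y' s = integral {xa..xb} (\<lambda>x. damped \<epsilon> (U 0 x s) * (lam1 - U 0 x s + a1 * V 0 x s))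
      + M * integral {xa..xb} (\<lambda>x. damped \<epsilon> (V 0 x s) * (lam2 - V 0 x s - a2 * U 0 x s))" for s
  have tpos_iff: "r \<in> tpos T \<longleftrightarrow> 0 < r \<and> r \<in> tcl T" for r
    by (auto simp: tpos_def tcl_def)
  have sub: "{0..t} \<subseteq> tcl T"
  proof
    fix r assume r: "r \<in> {0..t}"
    have "ereal r \<le> ereal t" "ereal t < T" using r t by (simp_all add: tpos_def)
    then have "ereal r < T" by (rule le_less_trans)
    then show "r \<in> tcl T" using r by (simp add: tcl_def)
  qed
  have deriv: "(y has_real_derivative y' s) (at s)" if "s \<in> tpos T" for s
    unfolding y_def[abs_def] y'_def
    by (intro DERIV_add DERIV_cmult approx_sol_u_mass_has_derivative approx_sol_v_mass_has_derivative that)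
  have cont: "continuous_on {0..t} y"
    unfolding continuous_on_eq_continuous_within
  proof
    fix r assume r: "r \<in> {0..t}"
    show "continuous (at r within {0..t}) y"
    proof (cases "r = 0")
      case True
      have "(y \<longlongrightarrow> y 0) (at 0 within tcl T)"
        unfolding y_def[abs_def] by (intro tendsto_add tendsto_mult_left approx_sol_mass_continuous_at_0)
      then have "(y \<longlongrightarrow> y 0) (at 0 within {0..t})" using sub by (rule tendsto_within_subset)
      then show ?thesis using True by (simp add: continuous_within)
    next
      case False
      then have "r \<in> tpos T" using r sub by (auto simp: tpos_iff)
      then have "isCont y r" by (rule DERIV_isCont[OF deriv])
      then show ?thesis by (rule continuous_at_imp_continuous_at_within)
    qed
  qed
  have "y t \<le> y 0 * exp (- t) + (xb - xa) * reaction_bound lam1 lam2 M * (1 - exp (- t))"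
  proof (rule differential_inequality_exp_bound[OF _ cont])
    show "0 < t" using t by (simp add: tpos_def)
    fix r assume "0 < r" "r < t"
    then have r: "r \<in> tpos T" using sub by (auto simp: tpos_iff)
    show "(y has_real_derivative y' r) (at r)" by (rule deriv[OF r])
    show "y' r \<le> (xb - xa) * reaction_bound lam1 lam2 M - y r"
      unfolding y_def y'_def by (rule approx_sol_reaction_integral_le[OF params eps1 M r])
  qed
  then show ?thesis unfolding y_def .
qed

lemma approx_sol_mass_le_of_initial_bounds:
  assumes params: "0 \<le> a1" "0 \<le> a2" "0 \<le> lam1" "0 \<le> lam2" and eps1: "\<epsilon> \<le> 1"
    and M: "1 \<le> M" "a1\<^sup>2 \<le> M" and t: "t \<in> tpos T"
    and U0_le: "\<And>x. x \<in> {xa<..<xb} \<Longrightarrow> U0 x \<le> BU"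
    and V0_le: "\<And>x. x \<in> {xa<..<xb} \<Longrightarrow> V0 x \<le> BV"
  shows "(LBINT x=xa..xb. U 0 x t) + (LBINT x=xa..xb. V 0 x t)
      \<le> (BU + M * BV) * (xb - xa) * exp (- t) + (xb - xa) * reaction_bound lam1 lam2 M * (1 - exp (- t))"
proof -
  have "0 < T" and init: "\<forall>x\<in>{xa..xb}. U 0 x 0 = U0 x \<and> V 0 x 0 = V0 x"
    using sol unfolding approx_sol_def by blast+
  then have zero: "0 \<in> tcl T" by (simp add: tcl_def zero_ereal_def)
  have t_tcl: "t \<in> tcl T" using t tpos_subset_tcl by blast
  note cont0 = approx_sol_continuous_on_slice[OF zero] and cont = approx_sol_continuous_on_slice[OF t_tcl]
  have "integral {xa..xb} (\<lambda>x. U 0 x 0) \<le> BU * (xb - xa)"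
    using Omega cont0 init U0_le by (intro integral_le_of_le_on_open_interval) auto
  moreover have "M * integral {xa..xb} (\<lambda>x. V 0 x 0) \<le> M * (BV * (xb - xa))"
    using Omega cont0 init V0_le M by (intro mult_left_mono integral_le_of_le_on_open_interval) auto
  ultimately have "integral {xa..xb} (\<lambda>x. U 0 x 0) + M * integral {xa..xb} (\<lambda>x. V 0 x 0)
      \<le> (BU + M * BV) * (xb - xa)"
    by (simp only: distrib_right mult.assoc)
  then have "(integral {xa..xb} (\<lambda>x. U 0 x 0) + M * integral {xa..xb} (\<lambda>x. V 0 x 0)) * exp (- t)
      \<le> (BU + M * BV) * (xb - xa) * exp (- t)"
    by (rule mult_right_mono) simp
  moreover have "integral {xa..xb} (\<lambda>x. V 0 x t) \<le> M * integral {xa..xb} (\<lambda>x. V 0 x t)"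
  proof -
    have "0 \<le> integral {xa..xb} (\<lambda>x. V 0 x t)"
      using approx_sol_pos(2)[OF _ t_tcl] cont
      by (intro integral_nonneg integrable_continuous_interval) (auto intro: less_imp_le)
    then show ?thesis using mult_right_mono[OF M(1)] by simp
  qed
  moreover have "(LBINT x=xa..xb. U 0 x t) = integral {xa..xb} (\<lambda>x. U 0 x t)"
      "(LBINT x=xa..xb. V 0 x t) = integral {xa..xb} (\<lambda>x. V 0 x t)"
    using Omega cont by (auto intro!: interval_integral_eq_integral borel_integrable_atLeastAtMost')
  ultimately show ?thesis using approx_sol_weighted_mass_le[OF params eps1 M(2) t] by linarith
qed

end

theorem lemma2p3:
  fixes xa xb D1 D2 a1 a2 lam1 lam2 chi1 chi2 \<alpha> n1 n2 :: real
    and u0 u0d v0 v0d :: "real \<Rightarrow> real"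
    and U0e V0e :: "real \<Rightarrow> nat \<Rightarrow> real \<Rightarrow> real"
    and T :: "real \<Rightarrow> ereal"
    and U V :: "real \<Rightarrow> nat \<Rightarrow> real \<Rightarrow> real \<Rightarrow> real"
    and Ut Vt :: "real \<Rightarrow> real \<Rightarrow> real \<Rightarrow> real"
  assumes Omega: "xa < xb"
    and pos: "D1 > 0" "D2 > 0" "a1 > 0" "a2 > 0" "lam1 > 0" "lam2 > 0" "chi1 > 0" "chi2 > 0"
    and alpha: "0 < \<alpha>" "\<alpha> \<le> 1/2"
    and n_range: "0 < n1" "n1 < 4" "0 < n2" "n2 < 4"
    \<comment> \<open>(IE)\<close>
    and u0_W12: "W12 xa xb u0 u0d" and v0_W12: "W12 xa xb v0 v0d"
    and u0_pos: "\<forall>x\<in>{xa..xb}. u0 x > 0" and v0_pos: "\<forall>x\<in>{xa..xb}. v0 x > 0"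
    and init_C5: "\<forall>\<epsilon>\<in>{0<..<1}. Ck_fam 5 xa xb (U0e \<epsilon>) \<and> Ck_fam 5 xa xb (V0e \<epsilon>)"
    and init_bc: "\<forall>\<epsilon>\<in>{0<..<1}. \<forall>x\<in>{xa, xb}.
        U0e \<epsilon> 1 x = 0 \<and> U0e \<epsilon> 3 x = 0 \<and> V0e \<epsilon> 1 x = 0 \<and> V0e \<epsilon> 3 x = 0"
    and init_bounds: "\<forall>\<epsilon>\<in>{0<..<1}. \<forall>x\<in>{xa<..<xb}.
        Inf (u0 ` {xa<..<xb}) / 2 \<le> U0e \<epsilon> 0 x \<and> U0e \<epsilon> 0 x \<le> u0 x + 1 \<and>
        Inf (v0 ` {xa<..<xb}) / 2 \<le> V0e \<epsilon> 0 x \<and> V0e \<epsilon> 0 x \<le> v0 x + 1"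
    and init_grad: "\<forall>\<epsilon>\<in>{0<..<1}.
        (LBINT x=xa..xb. (U0e \<epsilon> 1 x)\<^sup>2) \<le> (LBINT x=xa..xb. (u0d x)\<^sup>2) + 1 \<and>
        (LBINT x=xa..xb. (V0e \<epsilon> 1 x)\<^sup>2) \<le> (LBINT x=xa..xb. (v0d x)\<^sup>2) + 1"
    and init_conv: "AE x in lborel. x \<in> {xa<..<xb} \<longrightarrow>
        ((\<lambda>\<epsilon>. U0e \<epsilon> 0 x) \<longlongrightarrow> u0 x) (at_right 0) \<and>
        ((\<lambda>\<epsilon>. V0e \<epsilon> 0 x) \<longlongrightarrow> v0 x) (at_right 0)"
    \<comment> \<open>(u_eps, v_eps): the classical solutions with maximal existence time T eps\<close>
    and sol: "\<forall>\<epsilon>\<in>{0<..<1}. approx_sol xa xb D1 D2 a1 a2 lam1 lam2 chi1 chi2 \<alpha> n1 n2 \<epsilon>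
                 (U0e \<epsilon> 0) (V0e \<epsilon> 0) (T \<epsilon>) (U \<epsilon>) (Ut \<epsilon>) (V \<epsilon>) (Vt \<epsilon>)"
  shows "\<exists>m :: real \<Rightarrow> real.
     bounded (m ` {0<..}) \<and>
     (\<forall>\<epsilon>\<in>{0<..<1}. \<forall>t. 0 < t \<and> ereal t < T \<epsilon> \<longrightarrow>
        (LBINT x=xa..xb. U \<epsilon> 0 x t) + (LBINT x=xa..xb. V \<epsilon> 0 x t) \<le> m t) \<and>
     Limsup at_top (\<lambda>t. ereal (m t)) \<le>
       ereal ((xb - xa) / 2 * (lam1 + 1 / (2 * sqrt 3) + 1 + max (a1\<^sup>2) 1 * a2 / (2 * sqrt 3))\<^sup>2
            + (xb - xa) / 2 * (lam2 + 1 / (2 * sqrt 3) + 1)\<^sup>2 * max (a1\<^sup>2) 1)"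
proof -
  define M where "M = max (a1\<^sup>2) 1"
  define C where "C = (xb - xa) * reaction_bound lam1 lam2 M"
  obtain Bu Bv where Bu: "\<forall>x\<in>{xa..xb}. u0 x \<le> Bu" and Bv: "\<forall>x\<in>{xa..xb}. v0 x \<le> Bv"
    using W12_bounded_above[OF u0_W12] W12_bounded_above[OF v0_W12] by blast
  define m where "m t = (Bu + 1 + M * (Bv + 1)) * (xb - xa) * exp (- t) + C" for t
  have M: "1 \<le> M" "a1\<^sup>2 \<le> M" and C: "0 \<le> C"
    using Omega unfolding M_def C_def reaction_bound_def by auto
  have "(LBINT x=xa..xb. U \<epsilon> 0 x t) + (LBINT x=xa..xb. V \<epsilon> 0 x t) \<le> m t"
    if \<epsilon>: "\<epsilon> \<in> {0<..<1}" and t: "0 < t \<and> ereal t < T \<epsilon>" for \<epsilon> t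
  proof -
    have "(LBINT x=xa..xb. U \<epsilon> 0 x t) + (LBINT x=xa..xb. V \<epsilon> 0 x t)
        \<le> (Bu + 1 + M * (Bv + 1)) * (xb - xa) * exp (- t) + C * (1 - exp (- t))"
      unfolding C_def
    proof (rule approx_sol_mass_le_of_initial_bounds[OF Omega _ sol[rule_format, OF \<epsilon>]])
      show "t \<in> tpos (T \<epsilon>)" using t by (simp add: tpos_def)
      fix x assume x: "x \<in> {xa<..<xb}"
      then have "U0e \<epsilon> 0 x \<le> u0 x + 1" "V0e \<epsilon> 0 x \<le> v0 x + 1" using init_bounds \<epsilon> by blast+
      moreover have "u0 x \<le> Bu" "v0 x \<le> Bv" using x Bu Bv by auto
      ultimately show "U0e \<epsilon> 0 x \<le> Bu + 1" "V0e \<epsilon> 0 x \<le> Bv + 1" by linarith+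
    qed (use \<epsilon> pos M in auto)
    moreover have "0 \<le> C * exp (- t)" using C by simp
    ultimately show ?thesis unfolding m_def right_diff_distrib mult_1_right by linarith
  qed
  moreover have "bounded (m ` {0<..})" unfolding m_def[abs_def] by (rule bounded_exp_decay)
  moreover have "Limsup at_top (\<lambda>t. ereal (m t)) = ereal C" unfolding m_def by (rule Limsup_exp_decay)
  moreover have "C \<le> (xb - xa) / 2 * (lam1 + 1 / (2 * sqrt 3) + 1 + max (a1\<^sup>2) 1 * a2 / (2 * sqrt 3))\<^sup>2
      + (xb - xa) / 2 * (lam2 + 1 / (2 * sqrt 3) + 1)\<^sup>2 * max (a1\<^sup>2) 1"
    unfolding C_def M_def using Omega pos by (intro scaled_reaction_bound_le) auto
  ultimately show ?thesis by (intro exI[of _ m]) auto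
qed

end
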